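(* Let $E$ and $X$ be Banach spaces. Then there exists an ultrafilter $\mathcal{U}$ (on some index set $I$) such that \[(E\widehat{\otimes} X^* )_\mathcal{U}/W_0\cong\mathcal{A}(E,X)^*,\] where $W_0=\left\{ (u_\alpha)_\mathcal{U}\in (E\widehat{\otimes} X^* )_\mathcal{U} : \lim_\mathcal{U}u_\alpha(T)=0 \text{ for all } T\in\mathcal{A}(E,X)\right\}$.
   Context: $\mathcal{A}(E,X)$ denotes the space of approximable operators from $E$ to $X$, i.e. the operator-norm closure of the space of bounded finite-rank operators $E\to X$. $E\widehat{\otimes} X^*$ is the projective tensor product. For $u=\sum_{i=1}^\infty a_i\otimes x_i^*\in E\widehat{\otimes} X^*$ and a bounded operator $T:E\to X$, $u(T)=\sum_{i=1}^\infty x_i^*(T(a_i))$. For a Banach space $Y$ and an ultrafilter $\mathcal U$ on an index set $I$, the ultrapower is $Y_\mathcal{U}=\ell^\infty(Y,I)/\{(y_\alpha): \lim_\mathcal{U}\|y_\alpha\|=0\}$ with norm $\|(y_\alpha)_\mathcal U\|=\lim_\mathcal U\|y_\alpha\|$, where $(y_\alpha)_\mathcal U$ denotes the class of the bounded family $(y_\alpha)$. The symbol $\cong$ denotes isometric isomorphism of Banach spaces. *)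

theory Defs
  imports "HOL-Analysis.Analysis"
begin

definition ultrafilter :: "'i filter \<Rightarrow> bool" where
  "ultrafilter U \<longleftrightarrow> U \<noteq> bot \<and> (\<forall>P. eventually P U \<or> eventually (\<lambda>x. \<not> P x) U)"

definition finite_rank :: "('e::real_normed_vector \<Rightarrow>\<^sub>L 'x::real_normed_vector) \<Rightarrow> bool" where
  "finite_rank T \<longleftrightarrow> (\<exists>S. finite S \<and> range (blinfun_apply T) \<subseteq> span S)"

definition approximable :: "('e::real_normed_vector \<Rightarrow>\<^sub>L 'x::real_normed_vector) set" where
  "approximable = closure {T. finite_rank T}"

text \<open>The dual A(E,X)^*: bounded linear functionals on the subspace A(E,X),
  represented by functions on all operators that vanish outside A(E,X).\<close>

definition approx_dual :: "(('e::real_normed_vector \<Rightarrow>\<^sub>L 'x::real_normed_vector) \<Rightarrow> real) set" where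
  "approx_dual = {\<phi>.
     (\<forall>T\<in>approximable. \<forall>S\<in>approximable. \<forall>s t. \<phi> (s *\<^sub>R T + t *\<^sub>R S) = s * \<phi> T + t * \<phi> S) \<and>
     (\<exists>K. \<forall>T\<in>approximable. \<bar>\<phi> T\<bar> \<le> K * norm T) \<and>
     (\<forall>T. T \<notin> approximable \<longrightarrow> \<phi> T = 0)}"

definition dual_norm :: "(('e::real_normed_vector \<Rightarrow>\<^sub>L 'x::real_normed_vector) \<Rightarrow> real) \<Rightarrow> real" where
  "dual_norm \<phi> = (SUP T\<in>(approximable \<inter> {T. norm T \<le> 1}). \<bar>\<phi> T\<bar>)"

text \<open>An element of E \<otimes>^ X^* is represented by an absolutely summable formal
  combination c of elementary tensors a \<otimes> f, i.e. u = \<Sum> c(a,f) a \<otimes> f with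
  \<Sum> |c(a,f)| \<parallel>a\<parallel> \<parallel>f\<parallel> < \<infinity>.  Its projective norm is computed by duality with
  the bounded bilinear forms of norm \<le> 1 on E \<times> X^* (the dual of E \<otimes>^ X^*);
  two representations give the same element iff their difference has norm 0.\<close>

type_synonym ('e, 'x) ptens = "'e \<times> ('x \<Rightarrow>\<^sub>L real) \<Rightarrow> real"

definition pt_rep :: "('e::real_normed_vector, 'x::real_normed_vector) ptens \<Rightarrow> bool" where
  "pt_rep c \<longleftrightarrow> (\<lambda>p. \<bar>c p\<bar> * (norm (fst p) * norm (snd p))) summable_on UNIV"

definition bil_ball :: "('e::real_normed_vector \<Rightarrow> ('x::real_normed_vector \<Rightarrow>\<^sub>L real) \<Rightarrow> real) set" where
  "bil_ball = {B. bounded_bilinear B \<and> (\<forall>a f. \<bar>B a f\<bar> \<le> norm a * norm f)}"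

definition pt_norm :: "('e::real_normed_vector, 'x::real_normed_vector) ptens \<Rightarrow> real" where
  "pt_norm c = (SUP B\<in>bil_ball. \<bar>\<Sum>\<^sub>\<infinity>p. c p * B (fst p) (snd p)\<bar>)"

definition pt_apply :: "('e::real_normed_vector, 'x::real_normed_vector) ptens \<Rightarrow> ('e \<Rightarrow>\<^sub>L 'x) \<Rightarrow> real" where
  "pt_apply c T = (\<Sum>\<^sub>\<infinity>p. c p * blinfun_apply (snd p) (blinfun_apply T (fst p)))"

text \<open>Bounded families (representatives of elements of the ultrapower).\<close>
definition up_fam :: "('i \<Rightarrow> ('e::real_normed_vector, 'x::real_normed_vector) ptens) set" where
  "up_fam = {v. (\<forall>\<alpha>. pt_rep (v \<alpha>)) \<and> bounded (range (\<lambda>\<alpha>. pt_norm (v \<alpha>)))}"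

definition up_norm :: "'i filter \<Rightarrow> ('i \<Rightarrow> ('e::real_normed_vector, 'x::real_normed_vector) ptens) \<Rightarrow> real" where
  "up_norm U v = Lim U (\<lambda>\<alpha>. pt_norm (v \<alpha>))"

definition W0 :: "'i filter \<Rightarrow> ('i \<Rightarrow> ('e::real_normed_vector, 'x::real_normed_vector) ptens) set" where
  "W0 U = {v \<in> up_fam. \<forall>T\<in>approximable. ((\<lambda>\<alpha>. pt_apply (v \<alpha>) T) \<longlongrightarrow> 0) U}"

definition quot_norm :: "'i filter \<Rightarrow> ('i \<Rightarrow> ('e::real_normed_vector, 'x::real_normed_vector) ptens) \<Rightarrow> real" where
  "quot_norm U v = Inf ((\<lambda>w. up_norm U (\<lambda>\<alpha> p. v \<alpha> p - w \<alpha> p)) ` W0 U)"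

text \<open>(E \<otimes>^ X^*)_U / W_0 \<cong> A(E,X)^*: there is a linear map \<Psi> from the bounded
  families onto A(E,X)^* whose kernel is exactly (the preimage of) W_0 and which
  carries the quotient norm to the dual norm.  This is exactly an isometric
  isomorphism of the quotient onto A(E,X)^*.\<close>
definition quot_iso_dual ::
  "'i filter \<Rightarrow> (('i \<Rightarrow> ('e::real_normed_vector, 'x::real_normed_vector) ptens) \<Rightarrow> (('e \<Rightarrow>\<^sub>L 'x) \<Rightarrow> real)) \<Rightarrow> bool" where
  "quot_iso_dual U \<Psi> \<longleftrightarrow>
     (\<forall>v\<in>up_fam. \<forall>w\<in>up_fam. \<forall>s t::real.
        \<Psi> (\<lambda>\<alpha> p. s * v \<alpha> p + t * w \<alpha> p) = (\<lambda>T. s * \<Psi> v T + t * \<Psi> w T)) \<and>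
     \<Psi> ` up_fam = approx_dual \<and>
     (\<forall>v\<in>up_fam. \<Psi> v = (\<lambda>_. 0) \<longleftrightarrow> v \<in> W0 U) \<and>
     (\<forall>v\<in>up_fam. dual_norm (\<Psi> v) = quot_norm U v)"

text \<open>A fixed index type, large enough to contain index sets of all sizes
  relevant for E and X (the informal statement quantifies over an arbitrary index set).\<close>
type_synonym ('e, 'x) idx =
  "((('e \<Rightarrow>\<^sub>L 'x) \<Rightarrow> real) + ((('x \<Rightarrow>\<^sub>L real) \<Rightarrow> real) + ('e, 'x) ptens)) set set"

end

(*
  Every bounded family (u_a) in the projective tensor product E (x) X^* induces the functional
  T |-> lim_U u_a(T) on A(E,X), whose kernel is W_0 by definition; the content of the theorem is
  that this map is onto A(E,X)^* and carries the quotient norm to the dual norm.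

  Both follow from local density. Fix a functional phi on A(E,X) of norm r, a finite set F of
  approximable operators and delta > 0. The gauge "least cost of approximating on F by a tensor,
  counting projective norm plus rho times the error" is sublinear, so by Hahn-Banach its value at
  phi is attained by a linear functional below it. Testing against elementary tensors a (x) f,
  which norm the operators, shows that such a functional is evaluation at an operator S of norm at
  most one, hence the gauge at phi is phi(S) <= r. So some tensor has norm at most r + delta and
  agrees with phi on F up to delta. Along an ultrafilter refining "F grows, delta -> 0" these
  local approximants form a bounded family whose functional is phi and whose ultrapower norm is at
  most r, which gives surjectivity and shows that the infimum defining the quotient norm is the
  dual norm.
*)
theory Submission
  imports Defs "HOL-Library.Function_Algebras"
begin

section \<open>Hahn--Banach for sublinear functionals\<close>

definition dominated_subspace ::
    "(real \<Rightarrow> 'v::ab_group_add \<Rightarrow> 'v) \<Rightarrow> ('v \<Rightarrow> real) \<Rightarrow> ('v \<times> real) set \<Rightarrow> bool" where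
  "dominated_subspace scl p G \<longleftrightarrow> (0, 0) \<in> G
     \<and> (\<forall>x a y b. (x, a) \<in> G \<longrightarrow> (y, b) \<in> G \<longrightarrow> (x + y, a + b) \<in> G)
     \<and> (\<forall>x a t. (x, a) \<in> G \<longrightarrow> (scl t x, t * a) \<in> G)
     \<and> (\<forall>x a. (x, a) \<in> G \<longrightarrow> a \<le> p x)"

lemma dominated_subspaceD:
  assumes "dominated_subspace scl p G"
  shows "(0, 0) \<in> G"
    and "(x, a) \<in> G \<Longrightarrow> (y, b) \<in> G \<Longrightarrow> (x + y, a + b) \<in> G"
    and "(x, a) \<in> G \<Longrightarrow> (scl t x, t * a) \<in> G"
    and "(x, a) \<in> G \<Longrightarrow> a \<le> p x"
  using assms unfolding dominated_subspace_def by blast+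

lemma dominated_subspace_Union_chain:
  assumes "C \<noteq> {}" and dominated: "\<And>X. X \<in> C \<Longrightarrow> dominated_subspace scl p X"
    and chain: "\<And>X Y. X \<in> C \<Longrightarrow> Y \<in> C \<Longrightarrow> X \<subseteq> Y \<or> Y \<subseteq> X"
  shows "dominated_subspace scl p (\<Union>C)"
  unfolding dominated_subspace_def
proof (intro conjI allI impI)
  obtain X where "X \<in> C" using assms(1) by blast
  then show "(0, 0) \<in> \<Union>C" using dominated_subspaceD(1)[OF dominated] by blast
next
  fix x a y b assume "(x, a) \<in> \<Union>C" "(y, b) \<in> \<Union>C"
  then obtain X Y where XY: "X \<in> C" "Y \<in> C" and xy: "(x, a) \<in> X \<union> Y" "(y, b) \<in> X \<union> Y" by blast
  have "X \<union> Y \<in> C" using chain[OF XY] XY by (elim disjE) (simp_all add: Un_absorb1 Un_absorb2)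
  moreover from this have "(x + y, a + b) \<in> X \<union> Y" by (rule dominated_subspaceD(2)[OF dominated xy])
  ultimately show "(x + y, a + b) \<in> \<Union>C" by blast
next
  fix x a t assume "(x, a) \<in> \<Union>C"
  then obtain X where "X \<in> C" "(x, a) \<in> X" by blast
  then show "(scl t x, t * a) \<in> \<Union>C" using dominated_subspaceD(3)[OF dominated] by blast
next
  fix x a assume "(x, a) \<in> \<Union>C"
  then obtain X where "X \<in> C" "(x, a) \<in> X" by blast
  then show "a \<le> p x" using dominated_subspaceD(4)[OF dominated] by simp
qed

context
  fixes scl :: "real \<Rightarrow> 'v::ab_group_add \<Rightarrow> 'v" and p :: "'v \<Rightarrow> real"
  assumes vector_space: "vector_space scl"
    and p_subadditive: "\<And>x y. p (x + y) \<le> p x + p y"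
    and p_pos_homogeneous: "\<And>x t. t \<ge> 0 \<Longrightarrow> p (scl t x) = t * p x"
begin

interpretation vector_space scl by (fact vector_space)

lemma sublinear_zero: "p 0 = 0"
  using p_pos_homogeneous[of 0 0] by simp

lemma dominated_subspace_line: "dominated_subspace scl p (range (\<lambda>t. (scl t z, t * p z)))"
  unfolding dominated_subspace_def
proof (intro conjI allI impI)
  show "(0, 0) \<in> range (\<lambda>t. (scl t z, t * p z))" by (auto intro!: image_eqI[of _ _ 0])
next
  fix x a y b assume "(x, a) \<in> range (\<lambda>t. (scl t z, t * p z))" "(y, b) \<in> range (\<lambda>t. (scl t z, t * p z))"
  then obtain s t where "(x, a) = (scl s z, s * p z)" "(y, b) = (scl t z, t * p z)" by blast
  then have "(x + y, a + b) = (scl (s + t) z, (s + t) * p z)" by (simp add: scale_left_distrib distrib_right)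
  then show "(x + y, a + b) \<in> range (\<lambda>t. (scl t z, t * p z))" by blast
next
  fix x a t assume "(x, a) \<in> range (\<lambda>t. (scl t z, t * p z))"
  then obtain s where "(x, a) = (scl s z, s * p z)" by blast
  then have "(scl t x, t * a) = (scl (t * s) z, (t * s) * p z)" by simp
  then show "(scl t x, t * a) \<in> range (\<lambda>t. (scl t z, t * p z))" by blast
next
  fix x a assume "(x, a) \<in> range (\<lambda>t. (scl t z, t * p z))"
  then obtain s where x: "x = scl s z" and a: "a = s * p z" by blast
  show "a \<le> p x"
  proof (cases "s \<ge> 0")
    case True
    then show ?thesis using x a p_pos_homogeneous by simp
  next
    case False
    have "0 \<le> p z + p (- z)" using p_subadditive[of z "- z"] sublinear_zero by simp
    moreover have "p x = - s * p (- z)"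
      using x False p_pos_homogeneous[of "- s" "- z"] by simp
    ultimately show ?thesis
      using a False mult_nonpos_nonneg[of s "p z + p (- z)"] by (simp add: algebra_simps)
  qed
qed

lemma dominated_subspace_extension_value:
  assumes "dominated_subspace scl p M"
  obtains c where "\<And>m a. (m, a) \<in> M \<Longrightarrow> a - p (m - x) \<le> c" and "\<And>m a. (m, a) \<in> M \<Longrightarrow> c \<le> p (m + x) - a"
proof
  note M = dominated_subspaceD[OF assms]
  define L where "L = {a - p (m - x) | m a. (m, a) \<in> M}"
  have bound: "a' - p (m' - x) \<le> p (m + x) - a" if "(m, a) \<in> M" "(m', a') \<in> M" for m a m' a'
  proof -
    have "a' + a \<le> p (m' + m)" using M(2,4) that by blast
    also have "\<dots> \<le> p (m' - x) + p (m + x)"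
      using p_subadditive[of "m' - x" "m + x"] by (simp add: algebra_simps)
    finally show ?thesis by simp
  qed
  have "L \<noteq> {}" using M(1) unfolding L_def by blast
  moreover have "bdd_above L" unfolding L_def bdd_above_def using bound[OF M(1)] by blast
  ultimately show "a - p (m - x) \<le> Sup L" "Sup L \<le> p (m + x) - a" if "(m, a) \<in> M" for m a
    using that by (auto simp: L_def intro!: cSup_upper cSup_least bound)
qed

context
  fixes M x c
  assumes M: "dominated_subspace scl p M"
    and c_lower: "\<And>m a. (m, a) \<in> M \<Longrightarrow> a - p (m - x) \<le> c"
    and c_upper: "\<And>m a. (m, a) \<in> M \<Longrightarrow> c \<le> p (m + x) - a"
begin

lemma extension_value_dominated:
  assumes "(m, a) \<in> M"
  shows "a + t * c \<le> p (m + scl t x)"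
proof -
  note M = dominated_subspaceD[OF M]
  consider "t = 0" | "t > 0" | "t < 0" by linarith
  then show ?thesis
  proof cases
    case 1
    then show ?thesis using M(4)[OF assms] by simp
  next
    case 2
    let ?z = "scl (1 / t) m + x"
    have "c \<le> p ?z - (1 / t) * a" using c_upper[OF M(3)[OF assms, of "1 / t"]] .
    then have "t * c \<le> t * p ?z - a" using 2 by (simp add: field_simps)
    moreover have "t * p ?z = p (m + scl t x)"
      using p_pos_homogeneous[of t ?z] 2 by (simp add: scale_right_distrib)
    ultimately show ?thesis by simp
  next
    case 3
    let ?z = "scl (- 1 / t) m - x"
    have "(- 1 / t) * a - p ?z \<le> c" using c_lower[OF M(3)[OF assms, of "- 1 / t"]] .
    then have "a + t * p ?z \<le> - t * c" using 3 by (simp add: field_simps)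
    moreover have "- t * p ?z = p (m + scl t x)"
      using p_pos_homogeneous[of "- t" ?z] 3 by (simp add: scale_right_diff_distrib)
    ultimately show ?thesis by simp
  qed
qed

lemma dominated_subspace_adjoin:
  "dominated_subspace scl p {(m + scl t x, a + t * c) | m a t. (m, a) \<in> M}"
  (is "dominated_subspace scl p ?M'")
  unfolding dominated_subspace_def
proof (intro conjI allI impI)
  note M = dominated_subspaceD[OF M]
  have "(0, 0) = (0 + scl 0 x, 0 + 0 * c)" by simp
  then show "(0, 0) \<in> ?M'" using M(1) by blast
next
  note M = dominated_subspaceD[OF M]
  fix y1 a1 y2 a2 assume "(y1, a1) \<in> ?M'" "(y2, a2) \<in> ?M'"
  then obtain m1 b1 t1 m2 b2 t2 where mb: "(m1, b1) \<in> M" "(m2, b2) \<in> M"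
    and "y1 = m1 + scl t1 x" "a1 = b1 + t1 * c" "y2 = m2 + scl t2 x" "a2 = b2 + t2 * c"
    by blast
  then have "(y1 + y2, a1 + a2) = ((m1 + m2) + scl (t1 + t2) x, (b1 + b2) + (t1 + t2) * c)"
    by (simp add: algebra_simps)
  then show "(y1 + y2, a1 + a2) \<in> ?M'" using M(2)[OF mb] by blast
next
  note M = dominated_subspaceD[OF M]
  fix y a s assume "(y, a) \<in> ?M'"
  then obtain m b t where mb: "(m, b) \<in> M" and "y = m + scl t x" "a = b + t * c" by blast
  then have "(scl s y, s * a) = (scl s m + scl (s * t) x, s * b + (s * t) * c)"
    by (simp add: algebra_simps)
  then show "(scl s y, s * a) \<in> ?M'" using M(3)[OF mb] by blast
next
  fix y a assume "(y, a) \<in> ?M'"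
  then show "a \<le> p y" using extension_value_dominated by blast
qed

end

lemma dominated_subspace_extend:
  assumes M: "dominated_subspace scl p M" and x: "\<nexists>a. (x, a) \<in> M"
  shows "\<exists>M'. dominated_subspace scl p M' \<and> M \<subset> M'"
proof -
  obtain c where c: "\<And>m a. (m, a) \<in> M \<Longrightarrow> a - p (m - x) \<le> c" "\<And>m a. (m, a) \<in> M \<Longrightarrow> c \<le> p (m + x) - a"
    using dominated_subspace_extension_value[OF M] by blast
  define M' where "M' = {(m + scl t x, a + t * c) | m a t. (m, a) \<in> M}"
  have "M \<subseteq> M'"
  proof
    fix z assume "z \<in> M"
    moreover have "z = (fst z + scl 0 x, snd z + 0 * c)" by simp
    ultimately show "z \<in> M'" unfolding M'_def by (metis (mono_tags, lifting) mem_Collect_eq prod.collapse)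
  qed
  moreover have "(x, c) \<in> M'"
  proof -
    have "(x, c) = (0 + scl 1 x, 0 + 1 * c)" by simp
    then show ?thesis unfolding M'_def using dominated_subspaceD(1)[OF M] by blast
  qed
  moreover have "dominated_subspace scl p M'" unfolding M'_def by (rule dominated_subspace_adjoin[OF M c])
  ultimately show ?thesis using x by blast
qed

lemma dominated_subspace_maximal:
  assumes "dominated_subspace scl p G"
  obtains M where "dominated_subspace scl p M" "G \<subseteq> M" "\<And>x. \<exists>a. (x, a) \<in> M"
proof -
  let ?A = "{M. dominated_subspace scl p M \<and> G \<subseteq> M}"
  have "\<exists>M\<in>?A. \<forall>X\<in>?A. M \<subseteq> X \<longrightarrow> X = M"
  proof (rule subset_Zorn_nonempty)
    show "?A \<noteq> {}" using assms by blast
  next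
    fix C assume C: "C \<noteq> {}" "subset.chain ?A C"
    then have "dominated_subspace scl p (\<Union>C)"
      by (intro dominated_subspace_Union_chain) (auto simp: subset_chain_def)
    moreover obtain X where "X \<in> C" using C(1) by blast
    then have "G \<subseteq> \<Union>C" using C(2) by (auto simp: subset_chain_def)
    ultimately show "\<Union>C \<in> ?A" by blast
  qed
  then obtain M where "M \<in> ?A" and max: "\<forall>X\<in>?A. M \<subseteq> X \<longrightarrow> X = M" by (rule bexE)
  then have M: "dominated_subspace scl p M" "G \<subseteq> M" by simp_all
  have "\<exists>a. (x, a) \<in> M" for x
  proof (rule ccontr)
    assume "\<nexists>a. (x, a) \<in> M"
    then obtain M' where M': "dominated_subspace scl p M'" "M \<subset> M'"
      using dominated_subspace_extend[OF M(1)] by blast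
    then have "M' \<in> ?A" using M(2) by blast
    then show False using max M'(2) by blast
  qed
  with M show ?thesis by (rule that)
qed

text \<open>Domination makes a dominated subspace the graph of a function: with \<open>(x, a)\<close> and
  \<open>(x, b)\<close> it contains \<open>(0, a - b)\<close>, so \<open>a - b \<le> p 0 = 0\<close>.\<close>

lemma dominated_subspace_unique:
  assumes "dominated_subspace scl p G" "(x, a) \<in> G" "(x, b) \<in> G"
  shows "a = b"
proof -
  note G = dominated_subspaceD[OF assms(1)]
  have "a - b \<le> 0" if "(x, a) \<in> G" "(x, b) \<in> G" for a b
  proof -
    have "(x + scl (- 1) x, a + - 1 * b) \<in> G" by (rule G(2)[OF that(1) G(3)[OF that(2)]])
    then have "(0, a - b) \<in> G" by simp
    then show ?thesis using G(4) sublinear_zero by fastforce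
  qed
  from this[OF assms(2,3)] this[OF assms(3,2)] show ?thesis by simp
qed

theorem hahn_banach_sublinear:
  obtains g where "\<And>x y. g (x + y) = g x + g y" "\<And>t x. g (scl t x) = t * g x"
    "\<And>x. g x \<le> p x" "g z = p z"
proof -
  obtain M where M: "dominated_subspace scl p M" "range (\<lambda>t. (scl t z, t * p z)) \<subseteq> M"
    and total: "\<And>x. \<exists>a. (x, a) \<in> M"
    using dominated_subspace_maximal[OF dominated_subspace_line] by blast
  define g where "g x = (THE a. (x, a) \<in> M)" for x
  have graph: "(x, g x) \<in> M" for x
  proof -
    have "\<exists>!a. (x, a) \<in> M" using total dominated_subspace_unique[OF M(1)] by blast
    then show ?thesis unfolding g_def by (rule theI')
  qed
  have graph_eq: "g x = a" if "(x, a) \<in> M" for x a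
    using dominated_subspace_unique[OF M(1) graph that] .
  note M_props = dominated_subspaceD[OF M(1)]
  show ?thesis
  proof (rule that)
    show "g (x + y) = g x + g y" for x y using M_props(2)[OF graph graph] graph_eq by blast
    show "g (scl t x) = t * g x" for t x using M_props(3)[OF graph] graph_eq by blast
    show "g x \<le> p x" for x using M_props(4)[OF graph] .
    have "(z, p z) = (scl 1 z, 1 * p z)" by simp
    then show "g z = p z" using M(2) graph_eq by blast
  qed
qed

end

lemma exists_norming_functional:
  fixes x0 :: "'x::real_normed_vector"
  obtains f :: "'x \<Rightarrow>\<^sub>L real" where "norm f \<le> 1" "f x0 = norm x0"
proof -
  have "vector_space (scaleR :: real \<Rightarrow> 'x \<Rightarrow> 'x)" by unfold_locales
  moreover have "norm (t *\<^sub>R x) = t * norm x" if "t \<ge> 0" for t and x :: 'x using that by simp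
  ultimately obtain g where add: "\<And>x y. g (x + y) = g x + g y" and scale: "\<And>t x. g (t *\<^sub>R x) = t * g x"
    and le: "\<And>x. g x \<le> norm x" and gx0: "g x0 = norm x0"
    using hahn_banach_sublinear[where p = norm and z = x0, OF _ norm_triangle_ineq] by blast
  have abs_le: "\<bar>g x\<bar> \<le> norm x" for x
    using le[of x] le[of "- x"] scale[of "- 1" x] by simp
  have "bounded_linear g"
    by (rule bounded_linear_intro[where K = 1]) (use add scale abs_le in auto)
  then show ?thesis
    using abs_le gx0 by (intro that[of "Blinfun g"] norm_blinfun_bound) (auto simp: bounded_linear_Blinfun_apply)
qed

section \<open>Ultrafilters\<close>

lemma Inf_chain_neq_bot:
  fixes C :: "'i filter set"
  assumes "C \<noteq> {}" "\<And>G. G \<in> C \<Longrightarrow> G \<noteq> bot" "\<And>G H. G \<in> C \<Longrightarrow> H \<in> C \<Longrightarrow> G \<le> H \<or> H \<le> G"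
  shows "Inf C \<noteq> bot"
proof -
  have "\<exists>K\<in>C. K \<le> inf G H" if "G \<in> C" "H \<in> C" for G H
    using assms(3)[OF that] that by (elim disjE) (auto simp: inf.absorb1 inf.absorb2)
  then have "eventually P (Inf C) \<longleftrightarrow> (\<exists>G\<in>C. eventually P G)" for P
    using eventually_Inf_base[OF assms(1)] by blast
  then show ?thesis using assms(2) unfolding trivial_limit_def by blast
qed

lemma ultrafilterI_minimal:
  assumes "U \<noteq> bot" and minimal: "\<And>G. G \<noteq> bot \<Longrightarrow> G \<le> U \<Longrightarrow> G = U"
  shows "ultrafilter U"
  unfolding ultrafilter_def
proof (intro conjI allI assms(1))
  fix P
  show "eventually P U \<or> eventually (\<lambda>x. \<not> P x) U"
  proof (rule ccontr)
    assume neither: "\<not> (eventually P U \<or> eventually (\<lambda>x. \<not> P x) U)"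
    let ?G = "inf U (principal {x. P x})"
    have "?G \<noteq> bot" using neither by (auto simp: trivial_limit_def eventually_inf_principal)
    then have "?G = U" using minimal by simp
    moreover have "eventually P ?G" by (simp add: eventually_inf_principal)
    ultimately show False using neither by simp
  qed
qed

lemma exists_ultrafilter_le:
  fixes F :: "'i filter"
  assumes "F \<noteq> bot"
  obtains U where "ultrafilter U" "U \<le> F"
proof -
  let ?A = "{G. G \<noteq> bot \<and> G \<le> F}"
  have "partial_order_on ?A (relation_of (\<lambda>G H. H \<le> G) ?A)"
    by (rule partial_order_on_relation_ofI) auto
  moreover have "\<exists>L\<in>?A. \<forall>G\<in>C. L \<le> G" if C: "C \<in> Chains (relation_of (\<lambda>G H. H \<le> G) ?A)" for C
  proof (cases "C = {}")
    case True
    then show ?thesis using assms by blast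
  next
    case False
    then obtain G where "G \<in> C" by blast
    have in_A: "G \<noteq> bot" "G \<le> F" if "G \<in> C" for G
      using C that unfolding Chains_def relation_of_def by blast+
    have "Inf C \<noteq> bot"
      using C False in_A(1) by (intro Inf_chain_neq_bot) (auto simp: Chains_def relation_of_def)
    moreover have "Inf C \<le> F" using order_trans[OF Inf_lower in_A(2)] \<open>G \<in> C\<close> by blast
    ultimately show ?thesis by (auto intro: Inf_lower)
  qed
  ultimately obtain U where U: "U \<in> ?A" and max: "\<forall>G\<in>?A. G \<le> U \<longrightarrow> G = U"
    by (rule predicate_Zorn[THEN bexE])
  have "ultrafilter U"
  proof (rule ultrafilterI_minimal)
    show "U \<noteq> bot" using U by simp
    show "G = U" if "G \<noteq> bot" "G \<le> U" for G using max that order_trans[OF that(2)] U by simp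
  qed
  then show ?thesis using U that by blast
qed

lemma ultrafilter_tendsto_Lim:
  fixes f :: "'i \<Rightarrow> 'a::t2_space"
  assumes U: "ultrafilter U" and S: "compact S" and f: "\<And>i. f i \<in> S"
  shows "(f \<longlongrightarrow> Lim U f) U"
proof -
  have "U \<noteq> bot" using U unfolding ultrafilter_def by blast
  then have "filtermap f U \<noteq> bot" by (simp add: filtermap_bot_iff)
  moreover have "eventually (\<lambda>y. y \<in> S) (filtermap f U)" by (simp add: eventually_filtermap f)
  ultimately obtain L where L: "inf (nhds L) (filtermap f U) \<noteq> bot"
    using S unfolding compact_filter by blast
  have "(f \<longlongrightarrow> L) U"
    unfolding tendsto_def
  proof (intro allI impI)
    fix V assume "open V" "L \<in> V"
    show "eventually (\<lambda>x. f x \<in> V) U"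
    proof (rule ccontr)
      assume "\<not> eventually (\<lambda>x. f x \<in> V) U"
      then have "eventually (\<lambda>x. f x \<notin> V) U" using U unfolding ultrafilter_def by blast
      moreover have "eventually (\<lambda>y. y \<in> V) (nhds L)" using \<open>open V\<close> \<open>L \<in> V\<close> eventually_nhds by blast
      ultimately have "eventually (\<lambda>_. False) (inf (nhds L) (filtermap f U))"
        unfolding eventually_inf eventually_filtermap
        by (intro exI[of _ "\<lambda>y. y \<in> V"] exI[of _ "\<lambda>y. y \<notin> V"]) auto
      then show False using L by (simp add: trivial_limit_def)
    qed
  qed
  with \<open>U \<noteq> bot\<close> show ?thesis by (simp add: tendsto_Lim)
qed

lemma ultrafilter_tendsto_Lim_real:
  fixes f :: "'i \<Rightarrow> real"
  assumes "ultrafilter U" "\<And>i. \<bar>f i\<bar> \<le> K"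
  shows "(f \<longlongrightarrow> Lim U f) U"
proof (rule ultrafilter_tendsto_Lim[OF assms(1)])
  show "f i \<in> {-K..K}" for i using assms(2)[of i] unfolding abs_le_iff by simp
qed simp

section \<open>Representations of projective tensors\<close>

lemma summable_on_abs_dominated:
  fixes f g :: "'a \<Rightarrow> real"
  assumes "g summable_on A" and "\<And>x. x \<in> A \<Longrightarrow> \<bar>f x\<bar> \<le> g x"
  shows "f summable_on A"
proof -
  have "(\<lambda>x. norm (g x)) summable_on A"
    using assms(1) by (rule summable_on_cong[THEN iffD1, rotated]) (use assms(2) in force)
  then have "(\<lambda>x. norm (f x)) summable_on A"
    by (rule Infinite_Sum.abs_summable_on_comparison_test) (use assms(2) in force)
  then show ?thesis using summable_on_iff_abs_summable_on_real by blast
qed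

lemma abs_infsum_dominated:
  fixes f g :: "'a \<Rightarrow> real"
  assumes "g summable_on A" and "\<And>x. x \<in> A \<Longrightarrow> \<bar>f x\<bar> \<le> g x"
  shows "\<bar>infsum f A\<bar> \<le> infsum g A"
proof -
  have "(\<lambda>x. norm (f x)) summable_on A"
    using summable_on_abs_dominated[OF assms] summable_on_iff_abs_summable_on_real by blast
  then have "norm (infsum f A) \<le> infsum (\<lambda>x. norm (f x)) A" by (rule norm_infsum_bound)
  also have "\<dots> \<le> infsum g A"
    using \<open>(\<lambda>x. norm (f x)) summable_on A\<close> assms by (intro infsum_mono) auto
  finally show ?thesis by simp
qed

definition pt_weight :: "('e::real_normed_vector, 'x::real_normed_vector) ptens \<Rightarrow> real" where
  "pt_weight c = (\<Sum>\<^sub>\<infinity>p. \<bar>c p\<bar> * (norm (fst p) * norm (snd p)))"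

lemma pt_weight_nonneg: "pt_weight c \<ge> 0"
  unfolding pt_weight_def by (intro infsum_nonneg) auto

lemma pt_rep_bilinear_summable:
  assumes "pt_rep c" "\<And>a f. \<bar>B a f\<bar> \<le> K * (norm a * norm f)"
  shows "(\<lambda>p. c p * B (fst p) (snd p)) summable_on UNIV"
    and "\<bar>\<Sum>\<^sub>\<infinity>p. c p * B (fst p) (snd p)\<bar> \<le> K * pt_weight c"
proof -
  let ?g = "\<lambda>p. K * (\<bar>c p\<bar> * (norm (fst p) * norm (snd p)))"
  have g: "?g summable_on UNIV" using assms(1) unfolding pt_rep_def by (rule summable_on_cmult_right)
  have le: "\<bar>c p * B (fst p) (snd p)\<bar> \<le> ?g p" for p
    using mult_left_mono[OF assms(2)[of "fst p" "snd p"] abs_ge_zero[of "c p"]]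
    by (simp add: abs_mult algebra_simps)
  show "(\<lambda>p. c p * B (fst p) (snd p)) summable_on UNIV" using summable_on_abs_dominated[OF g le] .
  have "\<bar>\<Sum>\<^sub>\<infinity>p. c p * B (fst p) (snd p)\<bar> \<le> infsum ?g UNIV" using abs_infsum_dominated[OF g le] .
  also have "\<dots> = K * pt_weight c"
    unfolding pt_weight_def using assms(1) unfolding pt_rep_def by (rule infsum_cmult_right)
  finally show "\<bar>\<Sum>\<^sub>\<infinity>p. c p * B (fst p) (snd p)\<bar> \<le> K * pt_weight c" .
qed

lemma zero_in_bil_ball: "(\<lambda>a f. 0) \<in> bil_ball"
  unfolding bil_ball_def by (auto simp: bounded_bilinear_def intro: exI[of _ 0])

lemma abs_pairing_le_pt_norm:
  assumes "pt_rep c" "B \<in> bil_ball"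
  shows "\<bar>\<Sum>\<^sub>\<infinity>p. c p * B (fst p) (snd p)\<bar> \<le> pt_norm c"
proof -
  have "bdd_above ((\<lambda>B. \<bar>\<Sum>\<^sub>\<infinity>p. c p * B (fst p) (snd p)\<bar>) ` bil_ball)"
    using pt_rep_bilinear_summable(2)[OF assms(1), where K = 1] unfolding bil_ball_def bdd_above_def by force
  then show ?thesis unfolding pt_norm_def using assms(2) by (rule cSUP_upper2) auto
qed

lemma pt_norm_nonneg: "pt_rep c \<Longrightarrow> pt_norm c \<ge> 0"
  using abs_pairing_le_pt_norm[OF _ zero_in_bil_ball] by fastforce

lemma pt_norm_le_pt_weight: "pt_rep c \<Longrightarrow> pt_norm c \<le> pt_weight c"
  unfolding pt_norm_def using zero_in_bil_ball
  by (intro cSUP_least) (auto simp: bil_ball_def intro!: pt_rep_bilinear_summable(2)[where K = 1, simplified])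

lemma abs_blinfun_blinfun_le:
  fixes T :: "'e::real_normed_vector \<Rightarrow>\<^sub>L 'x::real_normed_vector" and f :: "'x \<Rightarrow>\<^sub>L real"
  shows "\<bar>f (T a)\<bar> \<le> norm T * (norm a * norm f)"
proof -
  have "\<bar>f (T a)\<bar> \<le> norm f * norm (T a)" using norm_blinfun[of f "T a"] by simp
  also have "\<dots> \<le> norm f * (norm T * norm a)" by (intro mult_left_mono norm_blinfun) auto
  finally show ?thesis by (simp add: algebra_simps)
qed

lemma operator_pairing_in_bil_ball:
  fixes T :: "'e::real_normed_vector \<Rightarrow>\<^sub>L 'x::real_normed_vector"
  assumes "T \<noteq> 0"
  shows "(\<lambda>a f. blinfun_apply f (T a) / norm T) \<in> bil_ball"
proof -
  have "bounded_bilinear (\<lambda>a f. blinfun_apply f (T a) / norm T)"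
  proof (rule bounded_bilinear.intro)
    show "\<exists>K. \<forall>a f. norm (blinfun_apply f (T a) / norm T) \<le> norm a * norm f * K"
      using abs_blinfun_blinfun_le[where T = T] assms
      by (intro exI[of _ 1]) (auto simp: field_simps)
  qed (auto simp: blinfun.add_left blinfun.add_right blinfun.scaleR_left blinfun.scaleR_right add_divide_distrib)
  then show ?thesis
    unfolding bil_ball_def using abs_blinfun_blinfun_le[where T = T] assms
    by (auto simp: field_simps)
qed

lemma pt_apply_summable:
  fixes T :: "'e::real_normed_vector \<Rightarrow>\<^sub>L 'x::real_normed_vector"
  assumes "pt_rep c"
  shows "(\<lambda>p. c p * blinfun_apply (snd p) (blinfun_apply T (fst p))) summable_on UNIV"
  using pt_rep_bilinear_summable(1)[OF assms abs_blinfun_blinfun_le] by simp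

lemma abs_pt_apply_le:
  fixes T :: "'e::real_normed_vector \<Rightarrow>\<^sub>L 'x::real_normed_vector"
  assumes "pt_rep c"
  shows "\<bar>pt_apply c T\<bar> \<le> pt_norm c * norm T"
proof (cases "T = 0")
  case True
  then show ?thesis by (simp add: pt_apply_def)
next
  case False
  have "pt_apply c T / norm T = (\<Sum>\<^sub>\<infinity>p. c p * (blinfun_apply (snd p) (blinfun_apply T (fst p)) / norm T))"
    unfolding pt_apply_def divide_inverse infsum_cmult_left'[symmetric] by (simp add: mult.assoc)
  also have "\<bar>\<dots>\<bar> \<le> pt_norm c"
    using abs_pairing_le_pt_norm[OF assms operator_pairing_in_bil_ball[OF False]] by simp
  finally show ?thesis using False by (simp add: divide_simps)
qed

lemma pt_rep_lincomb:
  assumes "pt_rep c" "pt_rep d"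
  shows "pt_rep (\<lambda>p. s * c p + t * d p)"
  unfolding pt_rep_def
proof (rule summable_on_abs_dominated)
  let ?w = "\<lambda>p::'a \<times> ('b \<Rightarrow>\<^sub>L real). norm (fst p) * norm (snd p)"
  show "(\<lambda>p. \<bar>s\<bar> * (\<bar>c p\<bar> * ?w p) + \<bar>t\<bar> * (\<bar>d p\<bar> * ?w p)) summable_on UNIV"
    using assms unfolding pt_rep_def by (intro summable_on_add summable_on_cmult_right)
  fix p
  have "\<bar>s * c p + t * d p\<bar> * ?w p \<le> (\<bar>s\<bar> * \<bar>c p\<bar> + \<bar>t\<bar> * \<bar>d p\<bar>) * ?w p"
    by (intro mult_right_mono) (auto simp: abs_mult[symmetric] abs_triangle_ineq)
  then show "\<bar>\<bar>s * c p + t * d p\<bar> * ?w p\<bar> \<le> \<bar>s\<bar> * (\<bar>c p\<bar> * ?w p) + \<bar>t\<bar> * (\<bar>d p\<bar> * ?w p)"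
    by (simp add: algebra_simps)
qed

lemma pt_apply_lincomb:
  fixes T :: "'e::real_normed_vector \<Rightarrow>\<^sub>L 'x::real_normed_vector"
  assumes "pt_rep c" "pt_rep d"
  shows "pt_apply (\<lambda>p. s * c p + t * d p) T = s * pt_apply c T + t * pt_apply d T"
proof -
  let ?g = "\<lambda>p. blinfun_apply (snd p) (blinfun_apply T (fst p))"
  have "pt_apply (\<lambda>p. s * c p + t * d p) T = (\<Sum>\<^sub>\<infinity>p. s * (c p * ?g p) + t * (d p * ?g p))"
    unfolding pt_apply_def by (simp add: algebra_simps)
  also have "\<dots> = (\<Sum>\<^sub>\<infinity>p. s * (c p * ?g p)) + (\<Sum>\<^sub>\<infinity>p. t * (d p * ?g p))"
    using pt_apply_summable[OF assms(1)] pt_apply_summable[OF assms(2)]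
    by (intro infsum_add summable_on_cmult_right)
  also have "\<dots> = s * pt_apply c T + t * pt_apply d T"
    unfolding pt_apply_def using pt_apply_summable[OF assms(1)] pt_apply_summable[OF assms(2)]
    by (simp add: infsum_cmult_right)
  finally show ?thesis .
qed

lemma pt_rep_diff: "pt_rep c \<Longrightarrow> pt_rep d \<Longrightarrow> pt_rep (\<lambda>p. c p - d p)"
  using pt_rep_lincomb[of c d 1 "- 1"] by simp

lemma pt_apply_diff: "pt_rep c \<Longrightarrow> pt_rep d \<Longrightarrow> pt_apply (\<lambda>p. c p - d p) T = pt_apply c T - pt_apply d T"
  using pt_apply_lincomb[of c d 1 "- 1" T] by simp

lemma pt_apply_lincomb_operator:
  fixes T S :: "'e::real_normed_vector \<Rightarrow>\<^sub>L 'x::real_normed_vector"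
  assumes "pt_rep c"
  shows "pt_apply c (s *\<^sub>R T + t *\<^sub>R S) = s * pt_apply c T + t * pt_apply c S"
proof -
  let ?g = "\<lambda>T p. blinfun_apply (snd p) (blinfun_apply T (fst p))"
  have "pt_apply c (s *\<^sub>R T + t *\<^sub>R S) = (\<Sum>\<^sub>\<infinity>p. s * (c p * ?g T p) + t * (c p * ?g S p))"
    unfolding pt_apply_def
    by (simp add: blinfun.add_left blinfun.add_right blinfun.scaleR_left blinfun.scaleR_right algebra_simps)
  also have "\<dots> = (\<Sum>\<^sub>\<infinity>p. s * (c p * ?g T p)) + (\<Sum>\<^sub>\<infinity>p. t * (c p * ?g S p))"
    using pt_apply_summable[OF assms] by (intro infsum_add summable_on_cmult_right)
  also have "\<dots> = s * pt_apply c T + t * pt_apply c S"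
    unfolding pt_apply_def using pt_apply_summable[OF assms] by (simp add: infsum_cmult_right)
  finally show ?thesis .
qed

lemma pt_norm_diff_le:
  assumes "pt_rep c" "pt_rep d"
  shows "pt_norm (\<lambda>p. c p - d p) \<le> pt_norm c + pt_norm d"
  unfolding pt_norm_def[of "\<lambda>p. c p - d p"]
proof (rule cSUP_least)
  show "bil_ball \<noteq> {}" using zero_in_bil_ball by blast
  fix B :: "'a \<Rightarrow> ('b \<Rightarrow>\<^sub>L real) \<Rightarrow> real" assume B: "B \<in> bil_ball"
  have K: "\<And>a f. \<bar>B a f\<bar> \<le> 1 * (norm a * norm f)" using B unfolding bil_ball_def by auto
  have "(\<Sum>\<^sub>\<infinity>p. (c p - d p) * B (fst p) (snd p))
      = (\<Sum>\<^sub>\<infinity>p. c p * B (fst p) (snd p) + - (d p * B (fst p) (snd p)))"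
    by (simp add: algebra_simps)
  also have "\<dots> = (\<Sum>\<^sub>\<infinity>p. c p * B (fst p) (snd p)) - (\<Sum>\<^sub>\<infinity>p. d p * B (fst p) (snd p))"
    using pt_rep_bilinear_summable(1)[OF assms(1) K] pt_rep_bilinear_summable(1)[OF assms(2) K]
    by (subst infsum_add) (auto simp: summable_on_uminus infsum_uminus)
  finally show "\<bar>\<Sum>\<^sub>\<infinity>p. (c p - d p) * B (fst p) (snd p)\<bar> \<le> pt_norm c + pt_norm d"
    using abs_pairing_le_pt_norm[OF assms(1) B] abs_pairing_le_pt_norm[OF assms(2) B] by linarith
qed

lemma pt_rep_zero: "pt_rep (\<lambda>_. 0)"
  unfolding pt_rep_def by simp

lemma pt_weight_add_le:
  assumes "pt_rep c" "pt_rep d"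
  shows "pt_weight (\<lambda>p. c p + d p) \<le> pt_weight c + pt_weight d"
proof -
  let ?w = "\<lambda>p::'a \<times> ('b \<Rightarrow>\<^sub>L real). norm (fst p) * norm (snd p)"
  have "pt_weight (\<lambda>p. c p + d p) \<le> (\<Sum>\<^sub>\<infinity>p. \<bar>c p\<bar> * ?w p + \<bar>d p\<bar> * ?w p)"
    unfolding pt_weight_def using pt_rep_lincomb[OF assms, of 1 1] assms unfolding pt_rep_def
    by (intro infsum_mono summable_on_add)
      (auto simp: distrib_right[symmetric] intro!: mult_right_mono abs_triangle_ineq)
  also have "\<dots> = pt_weight c + pt_weight d"
    unfolding pt_weight_def using assms unfolding pt_rep_def by (rule infsum_add)
  finally show ?thesis .
qed

lemma pt_weight_scale: "pt_weight (\<lambda>p. t * c p) = \<bar>t\<bar> * pt_weight c"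
  unfolding pt_weight_def by (simp add: abs_mult mult.assoc infsum_cmult_right')

lemma
  fixes c :: "('e::real_normed_vector, 'x::real_normed_vector) ptens" and T :: "'e \<Rightarrow>\<^sub>L 'x"
  assumes "finite S" and "\<And>p. p \<notin> S \<Longrightarrow> c p = 0"
  shows pt_rep_finite_support: "pt_rep c"
    and pt_weight_finite_support: "pt_weight c = (\<Sum>p\<in>S. \<bar>c p\<bar> * (norm (fst p) * norm (snd p)))"
    and pt_apply_finite_support: "pt_apply c T = (\<Sum>p\<in>S. c p * blinfun_apply (snd p) (blinfun_apply T (fst p)))"
proof -
  have "(\<lambda>p. \<bar>c p\<bar> * (norm (fst p) * norm (snd p))) summable_on S" using assms(1) by simp
  then show "pt_rep c" unfolding pt_rep_def by (rule summable_on_cong_neutral[THEN iffD1, rotated -1]) (auto simp: assms(2))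
  have "pt_weight c = (\<Sum>\<^sub>\<infinity>p\<in>S. \<bar>c p\<bar> * (norm (fst p) * norm (snd p)))"
    unfolding pt_weight_def by (rule infsum_cong_neutral) (auto simp: assms(2))
  then show "pt_weight c = (\<Sum>p\<in>S. \<bar>c p\<bar> * (norm (fst p) * norm (snd p)))" using assms(1) by simp
  have "pt_apply c T = (\<Sum>\<^sub>\<infinity>p\<in>S. c p * blinfun_apply (snd p) (blinfun_apply T (fst p)))"
    unfolding pt_apply_def by (rule infsum_cong_neutral) (auto simp: assms(2))
  then show "pt_apply c T = (\<Sum>p\<in>S. c p * blinfun_apply (snd p) (blinfun_apply T (fst p)))" using assms(1) by simp
qed

section \<open>Approximable operators and their dual\<close>

lemma finite_rank_lincomb:
  assumes "finite_rank T" "finite_rank S"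
  shows "finite_rank (s *\<^sub>R T + t *\<^sub>R S)"
proof -
  obtain A B where A: "finite A" "range (blinfun_apply T) \<subseteq> span A"
    and B: "finite B" "range (blinfun_apply S) \<subseteq> span B"
    using assms unfolding finite_rank_def by blast
  have "range (blinfun_apply (s *\<^sub>R T + t *\<^sub>R S)) \<subseteq> span (A \<union> B)"
  proof
    fix y assume "y \<in> range (blinfun_apply (s *\<^sub>R T + t *\<^sub>R S))"
    then obtain x where y: "y = s *\<^sub>R T x + t *\<^sub>R S x"
      by (auto simp: blinfun.add_left blinfun.scaleR_left)
    have "T x \<in> span (A \<union> B)" "S x \<in> span (A \<union> B)"
      using A B span_mono[of A "A \<union> B"] span_mono[of B "A \<union> B"] by blast+
    then show "y \<in> span (A \<union> B)" unfolding y by (intro span_add span_scale)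
  qed
  then show ?thesis unfolding finite_rank_def using A B by blast
qed

lemma approximable_lincomb:
  assumes "T \<in> approximable" "S \<in> approximable"
  shows "s *\<^sub>R T + t *\<^sub>R S \<in> approximable"
proof -
  obtain a where a: "\<And>n. finite_rank (a n)" "a \<longlonglongrightarrow> T"
    using assms(1) unfolding approximable_def closure_sequential by blast
  obtain b where b: "\<And>n. finite_rank (b n)" "b \<longlonglongrightarrow> S"
    using assms(2) unfolding approximable_def closure_sequential by blast
  have "(\<lambda>n. s *\<^sub>R a n + t *\<^sub>R b n) \<longlonglongrightarrow> s *\<^sub>R T + t *\<^sub>R S"
    by (intro tendsto_intros a b)
  moreover have "finite_rank (s *\<^sub>R a n + t *\<^sub>R b n)" for n using a b finite_rank_lincomb by blast
  ultimately show ?thesis unfolding approximable_def closure_sequential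
    by (intro exI[of _ "\<lambda>n. s *\<^sub>R a n + t *\<^sub>R b n"]) simp
qed

lemma zero_approximable: "0 \<in> approximable"
proof -
  have "finite_rank 0" unfolding finite_rank_def by (intro exI[of _ "{}"]) auto
  then show ?thesis unfolding approximable_def using closure_subset by blast
qed

lemma approximable_scaleR: "T \<in> approximable \<Longrightarrow> t *\<^sub>R T \<in> approximable"
  using approximable_lincomb[OF _ zero_approximable, of T t 0] by simp

lemma approximable_sum:
  assumes "finite G" "G \<subseteq> approximable"
  shows "(\<Sum>T\<in>G. l T *\<^sub>R T) \<in> approximable"
  using assms
proof (induction G rule: finite_induct)
  case empty
  then show ?case using zero_approximable by simp
next
  case (insert T G)
  then show ?case using approximable_lincomb[of T "\<Sum>T\<in>G. l T *\<^sub>R T" "l T" 1] by simp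
qed

lemma approx_dual_lincomb:
  "\<phi> \<in> approx_dual \<Longrightarrow> T \<in> approximable \<Longrightarrow> S \<in> approximable \<Longrightarrow>
    \<phi> (s *\<^sub>R T + t *\<^sub>R S) = s * \<phi> T + t * \<phi> S"
  unfolding approx_dual_def by blast

lemma approx_dual_zero: "\<phi> \<in> approx_dual \<Longrightarrow> \<phi> 0 = 0"
  using approx_dual_lincomb[OF _ zero_approximable zero_approximable, of \<phi> 0 0] by simp

lemma approx_dual_sum:
  assumes "\<phi> \<in> approx_dual" "finite G" "G \<subseteq> approximable"
  shows "\<phi> (\<Sum>T\<in>G. l T *\<^sub>R T) = (\<Sum>T\<in>G. l T * \<phi> T)"
  using assms(2,3)
proof (induction G rule: finite_induct)
  case empty
  then show ?case using approx_dual_zero[OF assms(1)] by simp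
next
  case (insert T G)
  then have "\<phi> (l T *\<^sub>R T + 1 *\<^sub>R (\<Sum>T\<in>G. l T *\<^sub>R T)) = l T * \<phi> T + 1 * \<phi> (\<Sum>T\<in>G. l T *\<^sub>R T)"
    by (intro approx_dual_lincomb[OF assms(1)] approximable_sum) auto
  then show ?case using insert by simp
qed

lemma
  assumes "\<phi> \<in> approx_dual"
  shows dual_norm_nonneg: "dual_norm \<phi> \<ge> 0"
    and abs_approx_dual_le: "T \<in> approximable \<Longrightarrow> \<bar>\<phi> T\<bar> \<le> dual_norm \<phi> * norm T"
proof -
  obtain K where K: "\<And>T. T \<in> approximable \<Longrightarrow> \<bar>\<phi> T\<bar> \<le> K * norm T"
    using assms unfolding approx_dual_def by blast
  have "bdd_above ((\<lambda>T. \<bar>\<phi> T\<bar>) ` (approximable \<inter> {T. norm T \<le> 1}))"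
  proof (rule bdd_aboveI2)
    fix T :: "'a \<Rightarrow>\<^sub>L 'b" assume T: "T \<in> approximable \<inter> {T. norm T \<le> 1}"
    then have "\<bar>\<phi> T\<bar> \<le> max K 0 * norm T"
      using K[of T] mult_right_mono[of K "max K 0" "norm T"] by auto
    also have "\<dots> \<le> max K 0" using T by (simp add: mult_left_le)
    finally show "\<bar>\<phi> T\<bar> \<le> max K 0" .
  qed
  then have unit_ball: "\<bar>\<phi> T\<bar> \<le> dual_norm \<phi>" if "T \<in> approximable" "norm T \<le> 1" for T
    unfolding dual_norm_def using that by (intro cSUP_upper) auto
  show "dual_norm \<phi> \<ge> 0"
    using unit_ball[OF zero_approximable] approx_dual_zero[OF assms] by simp
  show "\<bar>\<phi> T\<bar> \<le> dual_norm \<phi> * norm T" if T: "T \<in> approximable"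
  proof (cases "T = 0")
    case True
    then show ?thesis using approx_dual_zero[OF assms] by simp
  next
    case False
    have "\<phi> T = norm T * \<phi> ((1 / norm T) *\<^sub>R T)"
      using approx_dual_lincomb[OF assms T zero_approximable, of "1 / norm T" 0] False by simp
    moreover have "\<bar>\<phi> ((1 / norm T) *\<^sub>R T)\<bar> \<le> dual_norm \<phi>"
      using unit_ball[OF approximable_scaleR[OF T]] False by simp
    ultimately show ?thesis
      by (metis abs_mult abs_norm_cancel mult.commute mult_right_mono norm_ge_zero)
  qed
qed

section \<open>Local density of tensors in the dual\<close>

definition approx_error ::
    "('e::real_normed_vector \<Rightarrow>\<^sub>L 'x::real_normed_vector) set \<Rightarrow> (('e \<Rightarrow>\<^sub>L 'x) \<Rightarrow> real) \<Rightarrow> ('e, 'x) ptens \<Rightarrow> real"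
  where "approx_error F z c = (\<Sum>T\<in>F. \<bar>z T - pt_apply c T\<bar>)"

definition local_gauge ::
    "('e::real_normed_vector \<Rightarrow>\<^sub>L 'x::real_normed_vector) set \<Rightarrow> real \<Rightarrow> (('e \<Rightarrow>\<^sub>L 'x) \<Rightarrow> real) \<Rightarrow> real"
  where "local_gauge F \<rho> z = (INF c \<in> Collect pt_rep. pt_weight c + \<rho> * approx_error F z c)"

lemma approx_error_nonneg: "approx_error F z c \<ge> 0"
  unfolding approx_error_def by (simp add: sum_nonneg)

lemma approx_error_add_le:
  assumes "pt_rep c" "pt_rep d"
  shows "approx_error F (y + z) (\<lambda>p. c p + d p) \<le> approx_error F y c + approx_error F z d"
proof -
  have "\<bar>(y + z) T - pt_apply (\<lambda>p. c p + d p) T\<bar> \<le> \<bar>y T - pt_apply c T\<bar> + \<bar>z T - pt_apply d T\<bar>" for T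
    using pt_apply_lincomb[OF assms, of 1 1 T] abs_triangle_ineq[of "y T - pt_apply c T" "z T - pt_apply d T"]
    by simp
  then show ?thesis unfolding approx_error_def sum.distrib[symmetric] by (rule sum_mono)
qed

lemma approx_error_scale:
  assumes "pt_rep c"
  shows "approx_error F (\<lambda>T. t * z T) (\<lambda>p. t * c p) = \<bar>t\<bar> * approx_error F z c"
proof -
  have "pt_apply (\<lambda>p. t * c p) T = t * pt_apply c T" for T
    using pt_apply_lincomb[OF assms assms, of t 0 T] by simp
  then show ?thesis
    unfolding approx_error_def by (simp add: sum_distrib_left abs_mult flip: right_diff_distrib)
qed

context
  fixes F :: "('e::real_normed_vector \<Rightarrow>\<^sub>L 'x::real_normed_vector) set" and \<rho> :: real
  assumes \<rho>: "\<rho> \<ge> 0"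
begin

lemma local_gauge_le: "pt_rep c \<Longrightarrow> local_gauge F \<rho> z \<le> pt_weight c + \<rho> * approx_error F z c"
  unfolding local_gauge_def using \<rho>
  by (intro cINF_lower bdd_belowI2[of _ 0])
    (auto intro!: add_nonneg_nonneg pt_weight_nonneg mult_nonneg_nonneg approx_error_nonneg)

lemma local_gauge_greatest:
  "(\<And>c. pt_rep c \<Longrightarrow> y \<le> pt_weight c + \<rho> * approx_error F z c) \<Longrightarrow> y \<le> local_gauge F \<rho> z"
  unfolding local_gauge_def using pt_rep_zero by (intro cINF_greatest) auto

lemma local_gauge_zero: "local_gauge F \<rho> 0 = 0"
proof (rule antisym)
  show "local_gauge F \<rho> 0 \<le> 0"
    using local_gauge_le[OF pt_rep_zero, of 0] by (simp add: pt_weight_def approx_error_def pt_apply_def)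
  show "0 \<le> local_gauge F \<rho> 0"
    using \<rho> by (intro local_gauge_greatest add_nonneg_nonneg pt_weight_nonneg mult_nonneg_nonneg approx_error_nonneg)
qed

lemma local_gauge_subadditive: "local_gauge F \<rho> (y + z) \<le> local_gauge F \<rho> y + local_gauge F \<rho> z"
proof -
  have "local_gauge F \<rho> (y + z) - (pt_weight d + \<rho> * approx_error F z d) \<le> pt_weight c + \<rho> * approx_error F y c"
    if c: "pt_rep c" and d: "pt_rep d" for c d
  proof -
    have "local_gauge F \<rho> (y + z) \<le> pt_weight (\<lambda>p. c p + d p) + \<rho> * approx_error F (y + z) (\<lambda>p. c p + d p)"
      using local_gauge_le[OF pt_rep_lincomb[OF c d, of 1 1], of "y + z"] by simp
    also have "\<dots> \<le> (pt_weight c + pt_weight d) + \<rho> * (approx_error F y c + approx_error F z d)"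
      using pt_weight_add_le[OF c d] approx_error_add_le[OF c d] \<rho> by (intro add_mono mult_left_mono)
    finally show ?thesis by (simp add: algebra_simps)
  qed
  then have "local_gauge F \<rho> (y + z) - (pt_weight d + \<rho> * approx_error F z d) \<le> local_gauge F \<rho> y"
    if "pt_rep d" for d
    using that by (intro local_gauge_greatest) auto
  then have "local_gauge F \<rho> (y + z) - local_gauge F \<rho> y \<le> local_gauge F \<rho> z"
    by (intro local_gauge_greatest) (auto simp: algebra_simps)
  then show ?thesis by simp
qed

lemma local_gauge_scale_le:
  assumes t: "t > 0"
  shows "local_gauge F \<rho> (\<lambda>T. t * z T) \<le> t * local_gauge F \<rho> z"
proof -
  have "local_gauge F \<rho> (\<lambda>T. t * z T) / t \<le> pt_weight c + \<rho> * approx_error F z c" if c: "pt_rep c" for c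
  proof -
    have "local_gauge F \<rho> (\<lambda>T. t * z T)
        \<le> pt_weight (\<lambda>p. t * c p) + \<rho> * approx_error F (\<lambda>T. t * z T) (\<lambda>p. t * c p)"
      using local_gauge_le[OF pt_rep_lincomb[OF c c, of t 0]] by simp
    also have "\<dots> = t * (pt_weight c + \<rho> * approx_error F z c)"
      using t by (simp add: pt_weight_scale approx_error_scale[OF c] algebra_simps)
    finally show ?thesis using t by (simp add: divide_simps mult.commute)
  qed
  then have "local_gauge F \<rho> (\<lambda>T. t * z T) / t \<le> local_gauge F \<rho> z" by (rule local_gauge_greatest)
  then show ?thesis using t by (simp add: divide_simps mult.commute)
qed

lemma local_gauge_pos_homogeneous:
  assumes "t \<ge> 0"
  shows "local_gauge F \<rho> (\<lambda>T. t * z T) = t * local_gauge F \<rho> z"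
proof (cases "t = 0")
  case True
  then show ?thesis using local_gauge_zero by (simp add: zero_fun_def)
next
  case False
  then have t: "t > 0" using assms by simp
  have "local_gauge F \<rho> z = local_gauge F \<rho> (\<lambda>T. (1 / t) * (t * z T))" using t by simp
  also have "\<dots> \<le> (1 / t) * local_gauge F \<rho> (\<lambda>T. t * z T)" using t by (intro local_gauge_scale_le) simp
  finally have "t * local_gauge F \<rho> z \<le> local_gauge F \<rho> (\<lambda>T. t * z T)" using t by (simp add: field_simps)
  then show ?thesis using local_gauge_scale_le[OF t, of z] by simp
qed

lemma local_gauge_cong: "(\<And>T. T \<in> F \<Longrightarrow> y T = z T) \<Longrightarrow> local_gauge F \<rho> y = local_gauge F \<rho> z"
  unfolding local_gauge_def approx_error_def by (simp cong: sum.cong)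

end

context
  fixes F :: "('e::real_normed_vector \<Rightarrow>\<^sub>L 'x::real_normed_vector) set" and \<rho> :: real
    and g :: "(('e \<Rightarrow>\<^sub>L 'x) \<Rightarrow> real) \<Rightarrow> real"
  assumes finite_F: "finite F" and \<rho>: "\<rho> \<ge> 0"
    and g_add: "\<And>y z. g (y + z) = g y + g z"
    and g_scale: "\<And>t z. g (\<lambda>T. t * z T) = t * g z"
    and g_le_gauge: "\<And>z. g z \<le> local_gauge F \<rho> z"
begin

lemma below_local_gauge_vanishes:
  assumes "\<And>T. T \<in> F \<Longrightarrow> z T = 0"
  shows "g z = 0"
proof -
  have "local_gauge F \<rho> z = 0" "local_gauge F \<rho> (\<lambda>T. - 1 * z T) = 0"
    using local_gauge_cong[OF \<rho>, where F = F and y = z and z = 0]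
      local_gauge_cong[OF \<rho>, where F = F and y = "\<lambda>T. - 1 * z T" and z = 0] assms
    by (simp_all add: local_gauge_zero[OF \<rho>])
  then show ?thesis using g_le_gauge[of z] g_le_gauge[of "\<lambda>T. - 1 * z T"] g_scale[of "- 1" z] by simp
qed

lemma below_local_gauge_expansion: "g z = (\<Sum>T\<in>F. z T * g (\<lambda>S. of_bool (S = T)))"
proof -
  have restrict: "g (\<lambda>S. if S \<in> G then z S else 0) = (\<Sum>T\<in>G. z T * g (\<lambda>S. of_bool (S = T)))"
    if "finite G" for G
    using that
  proof (induction G rule: finite_induct)
    case empty
    show ?case using g_scale[of 0 0] by (simp add: zero_fun_def)
  next
    case (insert T G)
    then have "(\<lambda>S. if S \<in> insert T G then z S else 0)
        = (\<lambda>S. if S \<in> G then z S else 0) + (\<lambda>S. z T * of_bool (S = T))"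
      by (auto simp: fun_eq_iff)
    then show ?case using insert g_add g_scale by simp
  qed
  have "z = (\<lambda>S. if S \<in> F then z S else 0) + (\<lambda>S. if S \<in> F then 0 else z S)"
    by (auto simp: fun_eq_iff)
  then have "g z = g ((\<lambda>S. if S \<in> F then z S else 0) + (\<lambda>S. if S \<in> F then 0 else z S))"
    by (rule arg_cong)
  also have "\<dots> = g (\<lambda>S. if S \<in> F then z S else 0) + g (\<lambda>S. if S \<in> F then 0 else z S)"
    by (rule g_add)
  also have "g (\<lambda>S. if S \<in> F then 0 else z S) = 0" by (rule below_local_gauge_vanishes) simp
  finally show ?thesis using restrict[OF finite_F] by simp
qed

text \<open>Testing \<open>g\<close> against the elementary tensor \<open>a \<otimes> f\<close>, whose gauge is at most
  \<open>\<parallel>a\<parallel> \<parallel>f\<parallel>\<close>, bounds the operator representing \<open>g\<close> on \<open>F\<close>.\<close>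

lemma norm_below_local_gauge_operator: "norm (\<Sum>T\<in>F. g (\<lambda>S. of_bool (S = T)) *\<^sub>R T) \<le> 1"
proof (rule norm_blinfun_bound)
  let ?S = "\<Sum>T\<in>F. g (\<lambda>S. of_bool (S = T)) *\<^sub>R T"
  fix a
  obtain f :: "'x \<Rightarrow>\<^sub>L real" where f: "norm f \<le> 1" "f (?S a) = norm (?S a)"
    by (rule exists_norming_functional)
  define c :: "('e, 'x) ptens" where "c = (\<lambda>q. of_bool (q = (a, f)))"
  have c_support: "finite {(a, f)}" "\<And>q. q \<notin> {(a, f)} \<Longrightarrow> c q = 0" unfolding c_def by auto
  have apply_c: "pt_apply c T = f (T a)" for T
    using pt_apply_finite_support[where c = c, OF c_support] by (simp add: c_def)
  have "norm (?S a) = f (?S a)" using f(2) by simp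
  also have "\<dots> = (\<Sum>T\<in>F. blinfun_apply f (blinfun_apply T a) * g (\<lambda>S. of_bool (S = T)))"
    by (simp add: blinfun.sum_left blinfun.sum_right blinfun.scaleR_left blinfun.scaleR_right mult.commute)
  also have "\<dots> = g (\<lambda>T. pt_apply c T)"
    using below_local_gauge_expansion[of "\<lambda>T. pt_apply c T"] by (simp add: apply_c)
  also have "\<dots> \<le> local_gauge F \<rho> (\<lambda>T. pt_apply c T)" by (rule g_le_gauge)
  also have "\<dots> \<le> pt_weight c"
    using local_gauge_le[where F = F and z = "pt_apply c", OF \<rho> pt_rep_finite_support[where c = c, OF c_support]]
    by (simp add: approx_error_def)
  also have "\<dots> = norm a * norm f"
    using pt_weight_finite_support[where c = c, OF c_support] by (simp add: c_def)
  also have "\<dots> \<le> 1 * norm a" using f(1) by (simp add: mult_left_le)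
  finally show "norm (?S a) \<le> 1 * norm a" .
qed simp

end

text \<open>By Hahn--Banach the gauge at \<open>\<phi>\<close> is the value at \<open>\<phi>\<close> of a linear functional below the
  gauge, and by the lemmas above such a functional is evaluation at an operator of norm at most one.\<close>

lemma local_gauge_approx_dual_le:
  fixes \<phi> :: "('e::real_normed_vector \<Rightarrow>\<^sub>L 'x::real_normed_vector) \<Rightarrow> real"
  assumes \<phi>: "\<phi> \<in> approx_dual" and F: "finite F" "F \<subseteq> approximable" and \<rho>: "\<rho> \<ge> 0"
  shows "local_gauge F \<rho> \<phi> \<le> dual_norm \<phi>"
proof -
  have "vector_space (\<lambda>t (z :: ('e \<Rightarrow>\<^sub>L 'x) \<Rightarrow> real) T. t * z T)"
    by unfold_locales (auto simp: algebra_simps)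
  note hahn_banach = hahn_banach_sublinear[where p = "local_gauge F \<rho>" and z = \<phi>, OF this
      local_gauge_subadditive[OF \<rho>] local_gauge_pos_homogeneous[OF \<rho>]]
  obtain g where g_add: "\<And>y z. g (y + z) = g y + g z" and g_scale: "\<And>t z. g (\<lambda>T. t * z T) = t * g z"
    and g_le: "\<And>z. g z \<le> local_gauge F \<rho> z" and g_\<phi>: "g \<phi> = local_gauge F \<rho> \<phi>"
    using hahn_banach by blast
  define S where "S = (\<Sum>T\<in>F. g (\<lambda>S. of_bool (S = T)) *\<^sub>R T)"
  have S: "S \<in> approximable" unfolding S_def using F by (rule approximable_sum)
  have "local_gauge F \<rho> \<phi> = \<phi> S"
    using below_local_gauge_expansion[OF F(1) \<rho> g_add g_scale g_le, of \<phi>] approx_dual_sum[OF \<phi> F]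
    by (simp add: g_\<phi> S_def mult.commute)
  also have "\<dots> \<le> dual_norm \<phi> * norm S" using abs_approx_dual_le[OF \<phi> S] by simp
  also have "\<dots> \<le> dual_norm \<phi>"
    using norm_below_local_gauge_operator[OF F(1) \<rho> g_add g_scale g_le] dual_norm_nonneg[OF \<phi>]
    by (simp add: S_def mult_left_le)
  finally show ?thesis .
qed

text \<open>With \<open>\<rho> = (r + \<delta>) / \<delta>\<close>, any tensor whose cost is below \<open>r + \<delta>\<close> has weight below \<open>r + \<delta>\<close>
  and error below \<open>\<delta>\<close>.\<close>

lemma approx_dual_local_approximation:
  fixes \<phi> :: "('e::real_normed_vector \<Rightarrow>\<^sub>L 'x::real_normed_vector) \<Rightarrow> real"
  assumes \<phi>: "\<phi> \<in> approx_dual" and F: "finite F" "F \<subseteq> approximable" and \<delta>: "\<delta> > 0"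
  obtains c where "pt_rep c" "pt_weight c \<le> dual_norm \<phi> + \<delta>"
    "\<And>T. T \<in> F \<Longrightarrow> \<bar>pt_apply c T - \<phi> T\<bar> \<le> \<delta>"
proof -
  define r where "r = dual_norm \<phi>"
  define \<rho> where "\<rho> = (r + \<delta>) / \<delta>"
  have \<rho>: "\<rho> > 0" using dual_norm_nonneg[OF \<phi>] \<delta> by (simp add: \<rho>_def r_def)
  have "local_gauge F \<rho> \<phi> < r + \<delta>"
    using local_gauge_approx_dual_le[OF \<phi> F less_imp_le[OF \<rho>]] \<delta> by (simp add: r_def)
  then have "\<exists>c. pt_rep c \<and> pt_weight c + \<rho> * approx_error F \<phi> c < r + \<delta>"
    using local_gauge_greatest[OF less_imp_le[OF \<rho>], where F = F and y = "r + \<delta>" and z = \<phi>]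
    by (meson not_le)
  then obtain c where c: "pt_rep c" and cost: "pt_weight c + \<rho> * approx_error F \<phi> c < r + \<delta>"
    by blast
  have "\<rho> * \<delta> = r + \<delta>" using \<delta> by (simp add: \<rho>_def)
  then have "\<rho> * approx_error F \<phi> c < \<rho> * \<delta>" using cost pt_weight_nonneg[of c] by linarith
  then have err: "approx_error F \<phi> c < \<delta>" using \<rho> by simp
  show ?thesis
  proof (rule that[OF c])
    have "\<rho> * approx_error F \<phi> c \<ge> 0" using \<rho> approx_error_nonneg[of F \<phi> c] by simp
    then show "pt_weight c \<le> dual_norm \<phi> + \<delta>" using cost by (simp add: r_def)
    show "\<bar>pt_apply c T - \<phi> T\<bar> \<le> \<delta>" if "T \<in> F" for T
    proof -
      have "\<bar>\<phi> T - pt_apply c T\<bar> \<le> approx_error F \<phi> c"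
        unfolding approx_error_def using F(1) that by (intro member_le_sum) auto
      then show ?thesis using err abs_minus_commute[of "pt_apply c T" "\<phi> T"] by linarith
    qed
  qed
qed

section \<open>The functional of a bounded family\<close>

lemma up_fam_rep: "v \<in> up_fam \<Longrightarrow> pt_rep (v \<alpha>)"
  unfolding up_fam_def by blast

lemma up_fam_bounded:
  assumes "v \<in> up_fam"
  shows "\<exists>K. \<forall>\<alpha>. pt_norm (v \<alpha>) \<le> K"
proof -
  obtain K where "\<forall>x\<in>range (\<lambda>\<alpha>. pt_norm (v \<alpha>)). norm x \<le> K"
    using assms unfolding up_fam_def bounded_iff by blast
  then have "\<forall>\<alpha>. pt_norm (v \<alpha>) \<le> K" by (simp add: abs_le_iff)
  then show ?thesis ..
qed

lemma up_famI:
  assumes "\<And>\<alpha>. pt_rep (v \<alpha>)" "\<And>\<alpha>. pt_norm (v \<alpha>) \<le> K"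
  shows "v \<in> up_fam"
proof -
  have "norm (pt_norm (v \<alpha>)) \<le> K" for \<alpha> using assms pt_norm_nonneg[OF assms(1)] by simp
  then have "bounded (range (\<lambda>\<alpha>. pt_norm (v \<alpha>)))" unfolding bounded_iff by blast
  then show ?thesis unfolding up_fam_def using assms by blast
qed

lemma up_fam_diff:
  assumes "v \<in> up_fam" "w \<in> up_fam"
  shows "(\<lambda>\<alpha> p. v \<alpha> p - w \<alpha> p) \<in> up_fam"
proof -
  obtain Kv Kw where Kv: "\<forall>\<alpha>. pt_norm (v \<alpha>) \<le> Kv" and Kw: "\<forall>\<alpha>. pt_norm (w \<alpha>) \<le> Kw"
    using up_fam_bounded[OF assms(1)] up_fam_bounded[OF assms(2)] by blast
  note reps = up_fam_rep[OF assms(1)] up_fam_rep[OF assms(2)]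
  show ?thesis
  proof (rule up_famI)
    show "pt_rep (\<lambda>p. v \<alpha> p - w \<alpha> p)" for \<alpha> using pt_rep_diff reps by blast
    show "pt_norm (\<lambda>p. v \<alpha> p - w \<alpha> p) \<le> Kv + Kw" for \<alpha>
      by (rule order_trans[OF pt_norm_diff_le[OF reps] add_mono]) (simp_all add: Kv Kw)
  qed
qed

lemma zero_in_W0: "(\<lambda>\<alpha> p. 0) \<in> W0 U"
proof -
  have "(\<lambda>\<alpha> p. 0) \<in> up_fam"
    using pt_norm_le_pt_weight[OF pt_rep_zero] by (intro up_famI[OF pt_rep_zero]) (simp add: pt_weight_def)
  then show ?thesis unfolding W0_def by (simp add: pt_apply_def)
qed

locale tensor_ultrapower =
  fixes U :: "'i filter"
    and F :: "'i \<Rightarrow> ('e::real_normed_vector \<Rightarrow>\<^sub>L 'x::real_normed_vector) set"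
    and \<delta> :: "'i \<Rightarrow> real"
  assumes ultrafilter: "ultrafilter U"
    and finite_F: "\<And>\<alpha>. finite (F \<alpha>)"
    and eventually_in_F: "\<And>T. eventually (\<lambda>\<alpha>. T \<in> F \<alpha>) U"
    and \<delta>_pos: "\<And>\<alpha>. 0 < \<delta> \<alpha>" and \<delta>_le_1: "\<And>\<alpha>. \<delta> \<alpha> \<le> 1"
    and \<delta>_tendsto: "(\<delta> \<longlongrightarrow> 0) U"
begin

lemma U_proper: "U \<noteq> bot"
  using ultrafilter unfolding ultrafilter_def by blast

definition limit_functional :: "('i \<Rightarrow> ('e, 'x) ptens) \<Rightarrow> ('e \<Rightarrow>\<^sub>L 'x) \<Rightarrow> real" where
  "limit_functional v T = (if T \<in> approximable then Lim U (\<lambda>\<alpha>. pt_apply (v \<alpha>) T) else 0)"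

lemma abs_pt_apply_up_fam_le:
  assumes "v \<in> up_fam"
  shows "\<exists>K. \<forall>\<alpha> T. \<bar>pt_apply (v \<alpha>) T\<bar> \<le> K * norm T"
proof -
  obtain K where K: "\<forall>\<alpha>. pt_norm (v \<alpha>) \<le> K" using up_fam_bounded[OF assms] by blast
  have "\<bar>pt_apply (v \<alpha>) T\<bar> \<le> K * norm T" for \<alpha> T
    using abs_pt_apply_le[OF up_fam_rep[OF assms]] mult_right_mono[OF K[rule_format] norm_ge_zero]
    by (rule order_trans)
  then show ?thesis by blast
qed

lemma tendsto_limit_functional:
  assumes "v \<in> up_fam" "T \<in> approximable"
  shows "((\<lambda>\<alpha>. pt_apply (v \<alpha>) T) \<longlongrightarrow> limit_functional v T) U"
proof -
  obtain K where "\<forall>\<alpha> T. \<bar>pt_apply (v \<alpha>) T\<bar> \<le> K * norm T" using abs_pt_apply_up_fam_le[OF assms(1)] ..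
  then have "((\<lambda>\<alpha>. pt_apply (v \<alpha>) T) \<longlongrightarrow> Lim U (\<lambda>\<alpha>. pt_apply (v \<alpha>) T)) U"
    by (intro ultrafilter_tendsto_Lim_real[OF ultrafilter]) blast
  with assms(2) show ?thesis by (simp add: limit_functional_def)
qed

lemma limit_functional_eqI:
  assumes "T \<in> approximable" "((\<lambda>\<alpha>. pt_apply (v \<alpha>) T) \<longlongrightarrow> l) U"
  shows "limit_functional v T = l"
  using assms U_proper by (simp add: limit_functional_def tendsto_Lim)

lemma limit_functional_outside: "T \<notin> approximable \<Longrightarrow> limit_functional v T = 0"
  by (simp add: limit_functional_def)

lemma limit_functional_in_approx_dual:
  assumes v: "v \<in> up_fam"
  shows "limit_functional v \<in> approx_dual"
proof -
  have "limit_functional v (s *\<^sub>R T + t *\<^sub>R S) = s * limit_functional v T + t * limit_functional v S"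
    if T: "T \<in> approximable" and S: "S \<in> approximable" for T S s t
  proof (rule limit_functional_eqI[OF approximable_lincomb[OF T S]])
    show "((\<lambda>\<alpha>. pt_apply (v \<alpha>) (s *\<^sub>R T + t *\<^sub>R S)) \<longlongrightarrow> s * limit_functional v T + t * limit_functional v S) U"
      unfolding pt_apply_lincomb_operator[OF up_fam_rep[OF v]]
      by (intro tendsto_add tendsto_mult_left tendsto_limit_functional v T S)
  qed
  moreover obtain K where K: "\<forall>\<alpha> T. \<bar>pt_apply (v \<alpha>) T\<bar> \<le> K * norm T"
    using abs_pt_apply_up_fam_le[OF v] ..
  have "\<bar>limit_functional v T\<bar> \<le> K * norm T" if T: "T \<in> approximable" for T
    using tendsto_rabs[OF tendsto_limit_functional[OF v T]] K
    by (intro tendsto_le[OF U_proper tendsto_const]) auto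
  then have "\<exists>K. \<forall>T\<in>approximable. \<bar>limit_functional v T\<bar> \<le> K * norm T" by blast
  ultimately show ?thesis unfolding approx_dual_def by (auto simp: limit_functional_outside)
qed

lemma limit_functional_lincomb:
  assumes v: "v \<in> up_fam" and w: "w \<in> up_fam"
  shows "limit_functional (\<lambda>\<alpha> p. s * v \<alpha> p + t * w \<alpha> p)
    = (\<lambda>T. s * limit_functional v T + t * limit_functional w T)"
proof
  fix T
  show "limit_functional (\<lambda>\<alpha> p. s * v \<alpha> p + t * w \<alpha> p) T = s * limit_functional v T + t * limit_functional w T"
  proof (cases "T \<in> approximable")
    case True
    have "((\<lambda>\<alpha>. s * pt_apply (v \<alpha>) T + t * pt_apply (w \<alpha>) T)
        \<longlongrightarrow> s * limit_functional v T + t * limit_functional w T) U"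
      by (intro tendsto_add tendsto_mult_left tendsto_limit_functional v w True)
    then show ?thesis
      by (intro limit_functional_eqI[OF True]) (simp add: pt_apply_lincomb up_fam_rep v w)
  next
    case False
    then show ?thesis by (simp add: limit_functional_outside)
  qed
qed

lemma limit_functional_eq_0_iff:
  assumes "v \<in> up_fam"
  shows "limit_functional v = (\<lambda>_. 0) \<longleftrightarrow> v \<in> W0 U"
proof
  assume lim0: "limit_functional v = (\<lambda>_. 0)"
  have "((\<lambda>\<alpha>. pt_apply (v \<alpha>) T) \<longlongrightarrow> 0) U" if "T \<in> approximable" for T
    using tendsto_limit_functional[OF assms that] lim0 by simp
  with assms show "v \<in> W0 U" unfolding W0_def by blast
next
  assume "v \<in> W0 U"
  then have "((\<lambda>\<alpha>. pt_apply (v \<alpha>) T) \<longlongrightarrow> 0) U" if "T \<in> approximable" for T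
    using that unfolding W0_def by blast
  then have "limit_functional v T = 0" for T
    using limit_functional_eqI limit_functional_outside by (cases "T \<in> approximable") auto
  then show "limit_functional v = (\<lambda>_. 0)" ..
qed

lemma tendsto_up_norm:
  assumes "v \<in> up_fam"
  shows "((\<lambda>\<alpha>. pt_norm (v \<alpha>)) \<longlongrightarrow> up_norm U v) U" and "up_norm U v \<ge> 0"
proof -
  obtain K where K: "\<forall>\<alpha>. pt_norm (v \<alpha>) \<le> K" using up_fam_bounded[OF assms] by blast
  have nonneg: "pt_norm (v \<alpha>) \<ge> 0" for \<alpha> by (rule pt_norm_nonneg[OF up_fam_rep[OF assms]])
  then have "\<bar>pt_norm (v \<alpha>)\<bar> \<le> K" for \<alpha> using K by simp
  then show lim: "((\<lambda>\<alpha>. pt_norm (v \<alpha>)) \<longlongrightarrow> up_norm U v) U"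
    unfolding up_norm_def by (rule ultrafilter_tendsto_Lim_real[OF ultrafilter])
  show "up_norm U v \<ge> 0" using tendsto_lowerbound[OF lim _ U_proper] nonneg by simp
qed

lemma exists_local_approximants:
  fixes \<phi> :: "('e \<Rightarrow>\<^sub>L 'x) \<Rightarrow> real"
  assumes \<phi>: "\<phi> \<in> approx_dual"
  obtains u where "\<And>\<alpha>. pt_rep (u \<alpha>)" "\<And>\<alpha>. pt_norm (u \<alpha>) \<le> dual_norm \<phi> + \<delta> \<alpha>"
    "\<And>\<alpha> T. T \<in> F \<alpha> \<Longrightarrow> T \<in> approximable \<Longrightarrow> \<bar>pt_apply (u \<alpha>) T - \<phi> T\<bar> \<le> \<delta> \<alpha>"
proof -
  have "\<exists>c. pt_rep c \<and> pt_weight c \<le> dual_norm \<phi> + \<delta> \<alpha>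
      \<and> (\<forall>T\<in>F \<alpha> \<inter> approximable. \<bar>pt_apply c T - \<phi> T\<bar> \<le> \<delta> \<alpha>)" for \<alpha>
  proof -
    have "finite (F \<alpha> \<inter> approximable)" using finite_F by simp
    then obtain c where "pt_rep c" "pt_weight c \<le> dual_norm \<phi> + \<delta> \<alpha>"
      "\<And>T. T \<in> F \<alpha> \<inter> approximable \<Longrightarrow> \<bar>pt_apply c T - \<phi> T\<bar> \<le> \<delta> \<alpha>"
      using approx_dual_local_approximation[OF \<phi> _ Int_lower2 \<delta>_pos] by metis
    then show ?thesis by blast
  qed
  then have "\<forall>\<alpha>. \<exists>c. pt_rep c \<and> pt_weight c \<le> dual_norm \<phi> + \<delta> \<alpha>
      \<and> (\<forall>T\<in>F \<alpha> \<inter> approximable. \<bar>pt_apply c T - \<phi> T\<bar> \<le> \<delta> \<alpha>)" ..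
  then obtain u where u: "\<forall>\<alpha>. pt_rep (u \<alpha>) \<and> pt_weight (u \<alpha>) \<le> dual_norm \<phi> + \<delta> \<alpha>
      \<and> (\<forall>T\<in>F \<alpha> \<inter> approximable. \<bar>pt_apply (u \<alpha>) T - \<phi> T\<bar> \<le> \<delta> \<alpha>)"
    by (rule choice[THEN exE])
  show ?thesis
  proof (rule that)
    show "pt_rep (u \<alpha>)" for \<alpha> using u by blast
    show "pt_norm (u \<alpha>) \<le> dual_norm \<phi> + \<delta> \<alpha>" for \<alpha>
      using u pt_norm_le_pt_weight[of "u \<alpha>"] order_trans by blast
    show "\<bar>pt_apply (u \<alpha>) T - \<phi> T\<bar> \<le> \<delta> \<alpha>" if "T \<in> F \<alpha>" "T \<in> approximable" for \<alpha> T
      using u that by blast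
  qed
qed

lemma approx_dual_lift:
  fixes \<phi> :: "('e \<Rightarrow>\<^sub>L 'x) \<Rightarrow> real"
  assumes \<phi>: "\<phi> \<in> approx_dual"
  obtains u where "u \<in> up_fam" "limit_functional u = \<phi>" "up_norm U u \<le> dual_norm \<phi>"
proof -
  obtain u where u_rep: "\<And>\<alpha>. pt_rep (u \<alpha>)" and u_norm: "\<And>\<alpha>. pt_norm (u \<alpha>) \<le> dual_norm \<phi> + \<delta> \<alpha>"
    and u_close: "\<And>\<alpha> T. T \<in> F \<alpha> \<Longrightarrow> T \<in> approximable \<Longrightarrow> \<bar>pt_apply (u \<alpha>) T - \<phi> T\<bar> \<le> \<delta> \<alpha>"
    using exists_local_approximants[OF \<phi>] by blast
  have u_fam: "u \<in> up_fam"
  proof (rule up_famI[OF u_rep])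
    show "pt_norm (u \<alpha>) \<le> dual_norm \<phi> + 1" for \<alpha> using u_norm[of \<alpha>] \<delta>_le_1[of \<alpha>] by linarith
  qed
  have "limit_functional u T = \<phi> T" for T
  proof (cases "T \<in> approximable")
    case True
    have "eventually (\<lambda>\<alpha>. norm (pt_apply (u \<alpha>) T - \<phi> T) \<le> \<delta> \<alpha>) U"
      using eventually_in_F[of T] by eventually_elim (use u_close True in auto)
    then have "((\<lambda>\<alpha>. pt_apply (u \<alpha>) T - \<phi> T) \<longlongrightarrow> 0) U"
      using \<delta>_tendsto by (rule Lim_null_comparison)
    then show ?thesis by (intro limit_functional_eqI[OF True]) (simp add: LIM_zero_iff)
  next
    case False
    then show ?thesis using \<phi> limit_functional_outside unfolding approx_dual_def by simp
  qed
  moreover have "up_norm U u \<le> dual_norm \<phi> + 0"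
    by (rule tendsto_le[OF U_proper tendsto_add[OF tendsto_const \<delta>_tendsto] tendsto_up_norm(1)[OF u_fam]])
      (intro always_eventually allI u_norm)
  ultimately show ?thesis using u_fam that by auto
qed

lemma limit_functional_surj: "limit_functional ` up_fam = approx_dual"
proof
  show "limit_functional ` up_fam \<subseteq> approx_dual" using limit_functional_in_approx_dual by blast
  show "approx_dual \<subseteq> limit_functional ` up_fam"
  proof
    fix \<phi> :: "('e \<Rightarrow>\<^sub>L 'x) \<Rightarrow> real" assume "\<phi> \<in> approx_dual"
    then obtain u where "u \<in> up_fam" "limit_functional u = \<phi>" by (rule approx_dual_lift)
    then show "\<phi> \<in> limit_functional ` up_fam" by blast
  qed
qed

lemma dual_norm_limit_functional_le:
  assumes v: "v \<in> up_fam" and w: "w \<in> W0 U"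
  shows "dual_norm (limit_functional v) \<le> up_norm U (\<lambda>\<alpha> p. v \<alpha> p - w \<alpha> p)"
  unfolding dual_norm_def
proof (rule cSUP_least)
  show "approximable \<inter> {T. norm T \<le> 1} \<noteq> {}" using zero_approximable by fastforce
  fix T :: "'e \<Rightarrow>\<^sub>L 'x" assume T: "T \<in> approximable \<inter> {T. norm T \<le> 1}"
  have w_fam: "w \<in> up_fam" and w_lim: "((\<lambda>\<alpha>. pt_apply (w \<alpha>) T) \<longlongrightarrow> 0) U"
    using w T unfolding W0_def by blast+
  note reps = up_fam_rep[OF v] up_fam_rep[OF w_fam]
  have "((\<lambda>\<alpha>. \<bar>pt_apply (v \<alpha>) T - pt_apply (w \<alpha>) T\<bar>) \<longlongrightarrow> \<bar>limit_functional v T - 0\<bar>) U"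
    using T by (intro tendsto_rabs tendsto_diff tendsto_limit_functional v w_lim) auto
  moreover have "\<bar>pt_apply (v \<alpha>) T - pt_apply (w \<alpha>) T\<bar> \<le> pt_norm (\<lambda>p. v \<alpha> p - w \<alpha> p)" for \<alpha>
  proof -
    have "\<bar>pt_apply (\<lambda>p. v \<alpha> p - w \<alpha> p) T\<bar> \<le> pt_norm (\<lambda>p. v \<alpha> p - w \<alpha> p) * norm T"
      by (rule abs_pt_apply_le[OF pt_rep_diff[OF reps]])
    also have "\<dots> \<le> pt_norm (\<lambda>p. v \<alpha> p - w \<alpha> p)"
      using T pt_norm_nonneg[OF pt_rep_diff[OF reps]] by (simp add: mult_left_le)
    finally show ?thesis by (simp add: pt_apply_diff[OF reps])
  qed
  ultimately show "\<bar>limit_functional v T\<bar> \<le> up_norm U (\<lambda>\<alpha> p. v \<alpha> p - w \<alpha> p)"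
    using tendsto_up_norm(1)[OF up_fam_diff[OF v w_fam]] by (intro tendsto_le[OF U_proper]) auto
qed

text \<open>The infimum defining the quotient norm is attained at \<open>v - u\<close>, where \<open>u\<close> lifts
  \<open>limit_functional v\<close> without increasing its norm.\<close>

lemma dual_norm_limit_functional:
  assumes v: "v \<in> up_fam"
  shows "dual_norm (limit_functional v) = quot_norm U v"
proof (rule antisym)
  show "dual_norm (limit_functional v) \<le> quot_norm U v"
    unfolding quot_norm_def using zero_in_W0 dual_norm_limit_functional_le[OF v]
    by (intro cINF_greatest) auto
  obtain u where u: "u \<in> up_fam" "limit_functional u = limit_functional v"
    and u_norm: "up_norm U u \<le> dual_norm (limit_functional v)"
    by (rule approx_dual_lift[OF limit_functional_in_approx_dual[OF v]])
  have "limit_functional (\<lambda>\<alpha> p. 1 * v \<alpha> p + - 1 * u \<alpha> p) = (\<lambda>_. 0)"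
    using limit_functional_lincomb[OF v u(1), of 1 "- 1"] u(2) by simp
  then have vu: "(\<lambda>\<alpha> p. v \<alpha> p - u \<alpha> p) \<in> W0 U"
    using limit_functional_eq_0_iff[OF up_fam_diff[OF v u(1)]] by simp
  have "bdd_below ((\<lambda>w. up_norm U (\<lambda>\<alpha> p. v \<alpha> p - w \<alpha> p)) ` W0 U)"
    using tendsto_up_norm(2)[OF up_fam_diff[OF v]] unfolding W0_def by (intro bdd_belowI2[where m = 0]) auto
  then have "quot_norm U v \<le> up_norm U (\<lambda>\<alpha> p. v \<alpha> p - (v \<alpha> p - u \<alpha> p))"
    unfolding quot_norm_def using vu by (rule cINF_lower)
  then show "quot_norm U v \<le> dual_norm (limit_functional v)" using u_norm by simp
qed

theorem quot_iso_dual_limit_functional: "quot_iso_dual U limit_functional"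
  unfolding quot_iso_dual_def
  using limit_functional_lincomb limit_functional_surj limit_functional_eq_0_iff dual_norm_limit_functional
  by blast

end

section \<open>The index ultrafilter\<close>

definition idx_encode :: "('e::real_normed_vector \<Rightarrow>\<^sub>L 'x::real_normed_vector) set \<times> nat \<Rightarrow> ('e, 'x) idx" where
  "idx_encode x = {{Inl (\<lambda>T. of_bool (T \<in> fst x))}, {Inr (Inl (\<lambda>_. real (snd x)))}}"

lemma inj_idx_encode: "inj idx_encode"
proof (rule injI)
  fix x y :: "('e::real_normed_vector \<Rightarrow>\<^sub>L 'x::real_normed_vector) set \<times> nat"
  assume "idx_encode x = idx_encode y"
  then have "(\<lambda>T. of_bool (T \<in> fst x) :: real) = (\<lambda>T. of_bool (T \<in> fst y))"
    and "real (snd x) = real (snd y)"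
    unfolding idx_encode_def by (auto simp: doubleton_eq_iff fun_eq_iff)
  then have "fst x = fst y" "snd x = snd y" by (auto simp: fun_eq_iff of_bool_eq_iff)
  then show "x = y" by (simp add: prod_eq_iff)
qed

text \<open>The ultrafilter refines the directed set of pairs of a finite set of operators and an
  integer \<open>n\<close> (the tolerance \<open>1 / (n + 1)\<close>), transported to the fixed index type.\<close>

lemma exists_ultrafilter_idx:
  obtains U :: "('e::real_normed_vector, 'x::real_normed_vector) idx filter"
  where "ultrafilter U"
    "\<And>P. eventually P (finite_subsets_at_top UNIV \<times>\<^sub>F sequentially) \<Longrightarrow> eventually (\<lambda>\<alpha>. P (inv idx_encode \<alpha>)) U"
proof -
  let ?F0 = "finite_subsets_at_top (UNIV :: ('e \<Rightarrow>\<^sub>L 'x) set) \<times>\<^sub>F sequentially"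
  have "filtermap idx_encode ?F0 \<noteq> bot" by (simp add: filtermap_bot_iff prod_filter_eq_bot)
  then obtain U where U: "ultrafilter U" "U \<le> filtermap idx_encode ?F0" by (rule exists_ultrafilter_le)
  have "eventually (\<lambda>\<alpha>. P (inv idx_encode \<alpha>)) U" if "eventually P ?F0" for P
  proof -
    have "eventually (\<lambda>x. P (inv idx_encode (idx_encode x))) ?F0"
      using that by (simp add: inv_f_f[OF inj_idx_encode])
    then show ?thesis using U(2) by (simp add: eventually_filtermap filter_leD)
  qed
  with U(1) show ?thesis by (rule that)
qed

lemma exists_tensor_ultrapower:
  "\<exists>(U :: ('e::real_normed_vector, 'x::real_normed_vector) idx filter) (F :: _ \<Rightarrow> ('e \<Rightarrow>\<^sub>L 'x) set) \<delta>.
    tensor_ultrapower U F \<delta>"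
proof -
  obtain U :: "('e, 'x) idx filter" where U: "ultrafilter U" and eventually_U:
    "\<And>P. eventually P (finite_subsets_at_top UNIV \<times>\<^sub>F sequentially) \<Longrightarrow> eventually (\<lambda>\<alpha>. P (inv idx_encode \<alpha>)) U"
    using exists_ultrafilter_idx by blast
  define F :: "('e, 'x) idx \<Rightarrow> ('e \<Rightarrow>\<^sub>L 'x) set"
    where "F \<alpha> = (let S = fst (inv idx_encode \<alpha>) in if finite S then S else {})" for \<alpha>
  define \<delta> :: "('e, 'x) idx \<Rightarrow> real" where "\<delta> \<alpha> = 1 / real (Suc (snd (inv idx_encode \<alpha>)))" for \<alpha>
  have \<delta>_pos: "0 < \<delta> \<alpha>" for \<alpha> by (simp add: \<delta>_def)
  have "tensor_ultrapower U F \<delta>"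
  proof
    show "eventually (\<lambda>\<alpha>. T \<in> F \<alpha>) U" for T
    proof -
      have "eventually (\<lambda>x. finite (fst x) \<and> T \<in> fst x) (finite_subsets_at_top UNIV \<times>\<^sub>F sequentially)"
        unfolding eventually_prod_filter
        by (intro exI[of _ "\<lambda>S. finite S \<and> T \<in> S"] exI[of _ "\<lambda>_. True"])
          (auto simp: eventually_finite_subsets_at_top intro!: exI[of _ "{T}"])
      then show ?thesis unfolding F_def by (rule eventually_U[THEN eventually_mono]) (simp add: Let_def)
    qed
    show "(\<delta> \<longlongrightarrow> 0) U"
    proof (rule order_tendstoI)
      fix e :: real assume "0 < e"
      then obtain N where N: "inverse (real (Suc N)) < e" using reals_Archimedean by blast
      have "eventually (\<lambda>x. N \<le> snd x) (finite_subsets_at_top UNIV \<times>\<^sub>F sequentially)"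
        unfolding eventually_prod_filter
        by (intro exI[of _ "\<lambda>_. True"] exI[of _ "\<lambda>n. N \<le> n"]) auto
      then show "eventually (\<lambda>\<alpha>. \<delta> \<alpha> < e) U"
      proof (rule eventually_U[THEN eventually_mono])
        fix \<alpha> :: "('e, 'x) idx" assume "N \<le> snd (inv idx_encode \<alpha>)"
        then have "\<delta> \<alpha> \<le> inverse (real (Suc N))" by (simp add: \<delta>_def divide_simps)
        then show "\<delta> \<alpha> < e" using N by simp
      qed
    qed (use \<delta>_pos in \<open>auto intro: always_eventually less_trans\<close>)
  qed (use U \<delta>_pos in \<open>auto simp: F_def \<delta>_def Let_def\<close>)
  then show ?thesis by blast
qed

theorem corollary2p3:
  fixes E_witness :: "'e::banach itself" and X_witness :: "'x::banach itself"
  shows "\<exists>(U :: ('e, 'x) idx filter) (\<Psi> :: _ \<Rightarrow> ('e \<Rightarrow>\<^sub>L 'x) \<Rightarrow> real).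
           ultrafilter U \<and> quot_iso_dual U \<Psi>"
proof -
  obtain U :: "('e, 'x) idx filter" and F :: "_ \<Rightarrow> ('e \<Rightarrow>\<^sub>L 'x) set" and \<delta>
    where "tensor_ultrapower U F \<delta>"
    using exists_tensor_ultrapower by blast
  then interpret tensor_ultrapower U F \<delta> .
  show ?thesis using ultrafilter quot_iso_dual_limit_functional by (intro exI conjI)
qed

end
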